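(* The super-Apollonian group $\mathcal A^S=\langle\mathbf S_1,\mathbf S_2,\mathbf S_3,\mathbf S_4,\mathbf S_1^\perp,\mathbf S_2^\perp,\mathbf S_3^\perp,\mathbf S_4^\perp\rangle\subset GL(4,\mathbb Z)$ is a Coxeter group with the complete set of defining relations $$\mathbf S_i^2=(\mathbf S_i^\perp)^2=\mathbf I\ (1\le i\le4),\qquad (\mathbf S_i\mathbf S_j^\perp)^2=\mathbf I\ (i\neq j).$$ That is, the abstract group with generators $s_1,\dots,s_4,t_1,\dots,t_4$ and relations $s_i^2=t_i^2=1$ and $(s_it_j)^2=1$ for $i\ne j$ is isomorphic to $\mathcal A^S$ via $s_i\mapsto\mathbf S_i$, $t_i\mapsto\mathbf S_i^\perp$.
   Context: $\mathbf S_i$ is the $4\times4$ integer matrix agreeing with the identity except in row $i$, which has $-1$ in position $i$ and $2$ in the other three positions (e.g. first row of $\mathbf S_1$ is $(-1,2,2,2)$); $\mathbf S_i^\perp=\mathbf S_i^T$. *)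

theory Defs
  imports "HOL-Analysis.Analysis" "HOL-Library.Numeral_Type"
begin

text \<open>The matrix S_i (index i ranges over the 4-element type 4; the element k of type 4
  stands for the paper's index k+1). Row i: -1 at position i, 2 elsewhere; other rows
  agree with the identity.\<close>
definition S_mat :: "4 \<Rightarrow> int^4^4" where
  "S_mat i = (\<chi> r c. if r = i then (if c = i then -1 else 2) else (if r = c then 1 else 0))"

definition S_perp :: "4 \<Rightarrow> int^4^4" where
  "S_perp i = transpose (S_mat i)"

datatype letter = Sg 4 | Tg 4

definition letter_mat :: "letter \<Rightarrow> int^4^4" where
  "letter_mat a = (case a of Sg i \<Rightarrow> S_mat i | Tg i \<Rightarrow> S_perp i)"

definition eval_word :: "letter list \<Rightarrow> int^4^4" where
  "eval_word w = foldr (\<lambda>a M. letter_mat a ** M) w (mat 1)"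

definition relators :: "letter list set" where
  "relators = {[a, a] | a. True} \<union> {[Sg i, Tg j, Sg i, Tg j] | i j. i \<noteq> j}"

text \<open>Equality in the finitely presented group: the congruence on words generated by
  deleting a relator (every generator is an involution, so words over the letters represent
  all elements; the presented group is words modulo this congruence).\<close>
inductive word_eq :: "letter list \<Rightarrow> letter list \<Rightarrow> bool" where
  refl: "word_eq w w"
| sym: "word_eq u v \<Longrightarrow> word_eq v u"
| trans: "word_eq u v \<Longrightarrow> word_eq v w \<Longrightarrow> word_eq u w"
| rel: "r \<in> relators \<Longrightarrow> word_eq (x @ r @ y) (x @ y)"

end

theory Submission imports Defs begin

text \<open>
  Attach to every letter \<open>a\<close> a linear
  "root form" \<open>\<rho>\<^sub>a\<close> which the matrix of \<open>a\<close> negates and the matrices of the letters commuting with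
  \<open>a\<close> preserve, and take the base point \<open>v\<^sub>0 = (1,1,1,1)\<close>, at which all eight forms are positive.
  The orbit of \<open>v\<^sub>0\<close> lies on the level set \<open>Q = 8\<close> of the Descartes form
  \<open>Q x = (\<Sum>x\<^sub>k)\<^sup>2 - 2 \<Sum>x\<^sub>k\<^sup>2\<close>, and on that level set (within the half space \<open>\<Sum>x\<^sub>k > 0\<close>)
  the forms of two distinct non-commuting letters cannot both be non-positive. This is what
  makes Tits' argument for Coxeter groups work: by induction on the length of \<open>w\<close>, whenever
  \<open>\<rho>\<^sub>c(w v\<^sub>0) < 0\<close> the word \<open>w\<close> equals \<open>c w'\<close> in the presented group with \<open>w'\<close> shorter than
  \<open>w\<close>. If \<open>w = b u\<close> acts trivially, then \<open>\<rho>\<^sub>b(u v\<^sub>0) = -\<rho>\<^sub>b(v\<^sub>0) < 0\<close>, so \<open>w = b b u' = u'\<close>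
  is shortened, and induction shows that \<open>w\<close> is trivial in the presented group.
\<close>

lemma word_eq_append_cong:
  "word_eq u v \<Longrightarrow> word_eq (x @ u @ y) (x @ v @ y)"
proof (induction arbitrary: x y rule: word_eq.induct)
  case (refl w)
  then show ?case by (rule word_eq.refl)
next
  case (sym u v)
  then show ?case by (simp add: word_eq.sym)
next
  case (trans u v w)
  then show ?case by (meson word_eq.trans)
next
  case (rel r x' y')
  have "word_eq ((x @ x') @ r @ (y' @ y)) ((x @ x') @ (y' @ y))"
    by (rule word_eq.rel[OF rel])
  then show ?case by simp
qed

lemma word_eq_Cons: "word_eq u v \<Longrightarrow> word_eq (a # u) (a # v)"
  using word_eq_append_cong[of u v "[a]" "[]"] by simp

lemma square_in_relators: "[a, a] \<in> relators"
  by (auto simp: relators_def)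

lemma word_eq_cancel_square: "word_eq (a # a # w) w"
  using word_eq.rel[OF square_in_relators, of "[]" a w] by simp

lemma word_eq_append_rev: "word_eq (v @ rev v) []"
proof (induction v)
  case Nil
  then show ?case by (simp add: word_eq.refl)
next
  case (Cons c v)
  have "word_eq ([c] @ (v @ rev v) @ [c]) ([c] @ [] @ [c])"
    by (rule word_eq_append_cong[OF Cons])
  then show ?case using word_eq_cancel_square[of c "[]"] by (simp add: word_eq.trans)
qed

lemma word_eq_if_rev_append_trivial:
  assumes "word_eq (rev v @ u) []"
  shows "word_eq u v"
proof -
  have "word_eq (v @ (rev v @ u) @ []) (v @ [] @ [])"
    by (rule word_eq_append_cong[OF assms])
  moreover have "word_eq ([] @ (v @ rev v) @ u) ([] @ [] @ u)"
    by (rule word_eq_append_cong[OF word_eq_append_rev])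
  ultimately show ?thesis by simp (meson word_eq.sym word_eq.trans)
qed

definition commuting :: "letter \<Rightarrow> letter \<Rightarrow> bool" where
  "commuting a b \<longleftrightarrow> (\<exists>i j. i \<noteq> j \<and> (a = Sg i \<and> b = Tg j \<or> a = Tg j \<and> b = Sg i))"

lemma word_eq_swap_relator:
  assumes "[p, q, p, q] \<in> relators"
  shows "word_eq (q # p # w) (p # q # w)"
proof -
  have "word_eq ([] @ [p, q, p, q] @ (q # p # w)) ([] @ (q # p # w))"
    by (rule word_eq.rel[OF assms])
  moreover have "word_eq ([p, q, p] @ [q, q] @ (p # w)) ([p, q, p] @ (p # w))"
    by (rule word_eq.rel[OF square_in_relators])
  moreover have "word_eq ([p, q] @ [p, p] @ w) ([p, q] @ w)"
    by (rule word_eq.rel[OF square_in_relators])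
  ultimately show ?thesis by simp (meson word_eq.sym word_eq.trans)
qed

lemma word_eq_swap:
  assumes "commuting a b"
  shows "word_eq (a # b # w) (b # a # w)"
proof -
  from assms consider "[a, b, a, b] \<in> relators" | "[b, a, b, a] \<in> relators"
    by (auto simp: commuting_def relators_def)
  then show ?thesis
    by cases (use word_eq_swap_relator word_eq.sym in blast)+
qed

definition coord_sum :: "int^4 \<Rightarrow> int" where
  "coord_sum x = (\<Sum>k\<in>UNIV. x$k)"

lemma S_mat_mult_vec:
  "S_mat i *v x = (\<chi> k. if k = i then 2 * coord_sum x - 3 * x$i else x$k)"
  using exhaust_4[of i]
  by (auto simp: S_mat_def coord_sum_def matrix_vector_mult_def vec_eq_iff forall_4 sum_4)

lemma S_perp_mult_vec:
  "S_perp i *v x = (\<chi> k. if k = i then - x$i else x$k + 2 * x$i)"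
  using exhaust_4[of i]
  by (auto simp: S_perp_def transpose_def S_mat_def matrix_vector_mult_def vec_eq_iff
      forall_4 sum_4)

lemma S_mat_involution: "S_mat i ** S_mat i = mat 1"
  unfolding matrix_eq
  using exhaust_4[of i]
  by (auto simp: matrix_vector_mul_assoc[symmetric] S_mat_mult_vec vec_eq_iff forall_4 sum_4
      coord_sum_def)

lemma S_perp_involution: "S_perp i ** S_perp i = mat 1"
  unfolding matrix_eq
  using exhaust_4[of i]
  by (auto simp: matrix_vector_mul_assoc[symmetric] S_perp_mult_vec vec_eq_iff forall_4 sum_4)

lemma S_mat_S_perp_relation:
  "i \<noteq> j \<Longrightarrow> S_mat i ** (S_perp j ** (S_mat i ** S_perp j)) = mat 1"
  unfolding matrix_eq
  using exhaust_4[of i] exhaust_4[of j]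
  by (auto simp: matrix_vector_mul_assoc[symmetric] S_mat_mult_vec S_perp_mult_vec vec_eq_iff
      forall_4 sum_4 coord_sum_def)

lemma eval_word_Nil: "eval_word [] = mat 1"
  by (simp add: eval_word_def)

lemma eval_word_Cons: "eval_word (a # w) = letter_mat a ** eval_word w"
  by (simp add: eval_word_def)

lemma eval_word_append: "eval_word (u @ v) = eval_word u ** eval_word v"
  by (induction u) (simp_all add: eval_word_Nil eval_word_Cons matrix_mul_assoc matrix_mul_lid)

lemma eval_word_relator: "r \<in> relators \<Longrightarrow> eval_word r = mat 1"
  unfolding relators_def
  by (auto simp: eval_word_Cons eval_word_Nil matrix_mul_rid letter_mat_def S_mat_S_perp_relation
      S_mat_involution S_perp_involution split: letter.split)

lemma eval_word_eq_if_word_eq: "word_eq u v \<Longrightarrow> eval_word u = eval_word v"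
  by (induction rule: word_eq.induct)
    (simp_all add: eval_word_append eval_word_relator matrix_mul_lid)

definition descartes_form :: "int^4 \<Rightarrow> int" where
  "descartes_form x = (coord_sum x)\<^sup>2 - 2 * (\<Sum>k\<in>UNIV. (x$k)\<^sup>2)"

fun root_form :: "letter \<Rightarrow> int^4 \<Rightarrow> int" where
  "root_form (Sg i) x = coord_sum x - 2 * x$i"
| "root_form (Tg i) x = x$i"

lemma coord_sum_update:
  "coord_sum (\<chi> k. if k = i then A else x$k) = coord_sum x - x$i + A"
  "coord_sum (\<chi> k. if k = i then A else x$k + C) = coord_sum x - x$i + A + 3 * C"
  using exhaust_4[of i] by (auto simp: coord_sum_def sum_4)

lemma letter_mat_simps [simp]:
  "letter_mat (Sg i) = S_mat i"
  "letter_mat (Tg i) = S_perp i"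
  by (simp_all add: letter_mat_def)

lemma descartes_form_letter_mat: "descartes_form (letter_mat a *v x) = descartes_form x"
  using exhaust_4
  by (cases a) (auto simp: S_mat_mult_vec S_perp_mult_vec descartes_form_def coord_sum_def
      sum_4 power2_eq_square algebra_simps)

lemma root_form_letter_mat_self: "root_form a (letter_mat a *v x) = - root_form a x"
  by (cases a) (auto simp: coord_sum_update S_mat_mult_vec S_perp_mult_vec)

lemma root_form_letter_mat_commuting:
  "commuting a c \<Longrightarrow> root_form c (letter_mat a *v x) = root_form c x"
  unfolding commuting_def by (auto simp: coord_sum_update S_mat_mult_vec S_perp_mult_vec)

lemma coord_sum_letter_mat_pos:
  "coord_sum x > 0 \<Longrightarrow> root_form a x > 0 \<Longrightarrow> coord_sum (letter_mat a *v x) > 0"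
  by (cases a) (auto simp: coord_sum_update S_mat_mult_vec S_perp_mult_vec)

lemma descartes_form_le_pair:
  assumes "i \<noteq> j"
  shows "descartes_form x \<le> 2 * ((x$i + x$j) * (coord_sum x - x$i - x$j))"
proof -
  \<comment> \<open>The difference is \<open>(x\<^sub>i - x\<^sub>j)\<^sup>2 + (x\<^sub>k - x\<^sub>l)\<^sup>2\<close>,
    where \<open>{k, l}\<close> is the complement of \<open>{i, j}\<close>.\<close>
  have square_nonneg: "0 \<le> (x$k - x$l)\<^sup>2" for k l :: 4
    by simp
  show ?thesis
    using assms exhaust_4[of i] exhaust_4[of j] square_nonneg[of 1 2] square_nonneg[of 1 3]
      square_nonneg[of 1 4] square_nonneg[of 2 3] square_nonneg[of 2 4] square_nonneg[of 3 4]
    by (auto simp: descartes_form_def coord_sum_def sum_4 power2_eq_square algebra_simps)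
qed

lemma root_forms_not_both_nonpos:
  assumes "a \<noteq> c" "\<not> commuting a c"
    and "descartes_form x > 0" "coord_sum x > 0"
    and "root_form a x < 0" "root_form c x \<le> 0"
  shows False
proof -
  have pair_product_nonneg: "0 \<le> (x$i + x$j) * (coord_sum x - x$i - x$j)" if "i \<noteq> j" for i j
    using descartes_form_le_pair[OF that, of x] assms(3) by linarith
  consider (SS) i j where "a = Sg i" "c = Sg j" "i \<noteq> j"
    | (TT) i j where "a = Tg i" "c = Tg j" "i \<noteq> j"
    | (ST) i where "{a, c} = {Sg i, Tg i}"
    using assms(1,2) by (cases a; cases c) (auto simp: commuting_def)
  then show False
  proof cases
    case (SS i j)
    then have "x$i + x$j > 0" "coord_sum x - x$i - x$j < 0"
      using assms(4-6) by auto
    then have "(x$i + x$j) * (coord_sum x - x$i - x$j) < 0"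
      by (rule mult_pos_neg)
    then show False
      using pair_product_nonneg[OF \<open>i \<noteq> j\<close>] by linarith
  next
    case (TT i j)
    then have "x$i + x$j < 0" "coord_sum x - x$i - x$j > 0"
      using assms(4-6) by auto
    then have "(x$i + x$j) * (coord_sum x - x$i - x$j) < 0"
      by (rule mult_neg_pos)
    then show False
      using pair_product_nonneg[OF \<open>i \<noteq> j\<close>] by linarith
  next
    case (ST i)
    then show False
      using assms(4-6) by (auto simp: doubleton_eq_iff)
  qed
qed

definition base_point :: "int^4" where
  "base_point = (\<chi> k. 1)"

definition orbit_point :: "letter list \<Rightarrow> int^4" where
  "orbit_point w = eval_word w *v base_point"

lemma orbit_point_Nil: "orbit_point [] = base_point"
  by (simp add: orbit_point_def eval_word_Nil)

lemma orbit_point_Cons: "orbit_point (a # w) = letter_mat a *v orbit_point w"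
  by (simp add: orbit_point_def eval_word_Cons matrix_vector_mul_assoc)

lemma orbit_point_word_eq: "word_eq u v \<Longrightarrow> orbit_point u = orbit_point v"
  by (simp add: orbit_point_def eval_word_eq_if_word_eq)

lemma coord_sum_base_point: "coord_sum base_point = 4"
  by (simp add: base_point_def coord_sum_def sum_4)

lemma root_form_base_point_pos: "root_form a base_point > 0"
  by (cases a) (simp_all add: base_point_def coord_sum_def sum_4)

lemma descartes_form_orbit_point: "descartes_form (orbit_point w) = 8"
proof (induction w)
  case Nil
  then show ?case
    by (simp add: orbit_point_Nil descartes_form_def base_point_def coord_sum_def sum_4)
next
  case (Cons a w)
  then show ?case
    by (simp add: orbit_point_Cons descartes_form_letter_mat)
qed

definition left_descent :: "letter \<Rightarrow> letter list \<Rightarrow> bool" where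
  "left_descent c w \<longleftrightarrow> (\<exists>w'. word_eq w (c # w') \<and> length w' < length w)"

lemma left_descent_word_eq:
  assumes "word_eq w v" "length v \<le> length w" "left_descent c v"
  shows "left_descent c w"
  using assms word_eq.trans unfolding left_descent_def by fastforce

lemma left_descent_cancel:
  assumes "left_descent b u"
  obtains u' where "word_eq (b # u) u'" "length u' < length u"
proof -
  from assms obtain u' where "word_eq u (b # u')" "length u' < length u"
    unfolding left_descent_def by blast
  with word_eq_Cons word_eq_cancel_square word_eq.trans that show ?thesis by blast
qed

definition descent_criterion :: "letter list \<Rightarrow> bool" where
  "descent_criterion w \<longleftrightarrow> coord_sum (orbit_point w) > 0 \<and>
     (\<forall>c. root_form c (orbit_point w) \<noteq> 0 \<and>
       (root_form c (orbit_point w) < 0 \<longrightarrow> left_descent c w))"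

lemma descent_criterion_word_eq:
  assumes "word_eq w v" "length v \<le> length w" "descent_criterion v"
  shows "descent_criterion w"
  using assms orbit_point_word_eq[OF assms(1)] left_descent_word_eq[OF assms(1,2)]
  unfolding descent_criterion_def by simp

lemma descent_criterion_Cons_ascent:
  assumes "descent_criterion u" and ascent: "root_form b (orbit_point u) > 0"
  shows "descent_criterion (b # u)"
proof -
  let ?y = "orbit_point u" and ?x = "orbit_point (b # u)"
  have x: "?x = letter_mat b *v ?y"
    by (rule orbit_point_Cons)
  have pos: "coord_sum ?x > 0"
    using assms x coord_sum_letter_mat_pos by (simp add: descent_criterion_def)
  have root_b: "root_form b ?x < 0"
    using ascent x root_form_letter_mat_self by simp
  have "root_form c ?x \<noteq> 0 \<and> (root_form c ?x < 0 \<longrightarrow> left_descent c (b # u))" for c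
  proof (cases "c = b")
    case True
    then show ?thesis
      using root_b by (auto simp: left_descent_def intro: word_eq.refl)
  next
    case distinct: False
    show ?thesis
    proof (cases "commuting b c")
      case True
      have "left_descent c (b # u)" if "left_descent c u"
      proof -
        from that obtain u' where u': "word_eq u (c # u')" "length u' < length u"
          unfolding left_descent_def by blast
        then have "word_eq (b # u) (c # b # u')"
          using word_eq_Cons word_eq_swap[OF True] word_eq.trans by blast
        with u' show ?thesis
          unfolding left_descent_def by (intro exI[of _ "b # u'"]) simp
      qed
      moreover have "root_form c ?x = root_form c ?y"
        using x root_form_letter_mat_commuting[OF True] by simp
      ultimately show ?thesis
        using assms(1) by (auto simp: descent_criterion_def)
    next
      case False
      have "root_form c ?x > 0"
        using root_forms_not_both_nonpos[of b c ?x] distinct False pos root_b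
          descartes_form_orbit_point[of "b # u"] by fastforce
      then show ?thesis by simp
    qed
  qed
  then show ?thesis
    using pos by (simp add: descent_criterion_def)
qed

lemma descent_criterion_holds: "descent_criterion w"
proof (induction w rule: length_induct)
  case (1 w)
  show ?case
  proof (cases w)
    case Nil
    have "root_form c base_point \<noteq> 0 \<and> \<not> root_form c base_point < 0" for c
      using root_form_base_point_pos[of c] by simp
    with Nil show ?thesis
      by (simp add: descent_criterion_def orbit_point_Nil coord_sum_base_point)
  next
    case (Cons b u)
    then have u: "descent_criterion u"
      using "1.IH" by simp
    then have "root_form b (orbit_point u) \<noteq> 0"
      by (simp add: descent_criterion_def)
    then consider (descent) "root_form b (orbit_point u) < 0"
      | (ascent) "root_form b (orbit_point u) > 0"
      by linarith
    then show ?thesis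
    proof cases
      case descent
      with u have "left_descent b u"
        by (simp add: descent_criterion_def)
      then obtain u' where "word_eq w u'" "length u' < length u"
        using Cons left_descent_cancel by blast
      with "1.IH" Cons show ?thesis
        by (intro descent_criterion_word_eq[of w u']) simp_all
    next
      case ascent
      with u Cons show ?thesis
        by (simp add: descent_criterion_Cons_ascent)
    qed
  qed
qed

lemma word_eq_Nil_if_eval_word_trivial: "eval_word w = mat 1 \<Longrightarrow> word_eq w []"
proof (induction w rule: length_induct)
  case (1 w)
  show ?case
  proof (cases w)
    case Nil
    then show ?thesis by (simp add: word_eq.refl)
  next
    case (Cons b u)
    have "orbit_point w = base_point"
      using "1.prems" by (simp add: orbit_point_def matrix_vector_mul_lid)
    then have "root_form b base_point = root_form b (letter_mat b *v orbit_point u)"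
      using Cons by (simp add: orbit_point_Cons)
    also have "\<dots> = - root_form b (orbit_point u)"
      by (rule root_form_letter_mat_self)
    finally have "root_form b (orbit_point u) < 0"
      using root_form_base_point_pos[of b] by simp
    then have "left_descent b u"
      using descent_criterion_holds[of u] by (simp add: descent_criterion_def)
    then obtain u' where u': "word_eq w u'" "length u' < length u"
      using Cons left_descent_cancel by blast
    then have "eval_word u' = mat 1"
      using "1.prems" eval_word_eq_if_word_eq by metis
    with "1.IH" Cons u' have "word_eq u' []"
      by simp
    with u' show ?thesis
      using word_eq.trans by blast
  qed
qed

theorem theorem6p1:
  shows "\<forall>u v. eval_word u = eval_word v \<longleftrightarrow> word_eq u v"
proof (intro allI iffI)
  fix u v :: "letter list"
  assume eval_eq: "eval_word u = eval_word v"
  have "eval_word (rev v @ v) = mat 1"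
    using eval_word_eq_if_word_eq[OF word_eq_append_rev[of "rev v"]] by (simp add: eval_word_Nil)
  with eval_eq have "eval_word (rev v @ u) = mat 1"
    by (simp add: eval_word_append)
  then show "word_eq u v"
    by (rule word_eq_if_rev_append_trivial[OF word_eq_Nil_if_eval_word_trivial])
qed (rule eval_word_eq_if_word_eq)

end
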